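(* Let $\kappa=\frac4{27}$. For every positive integer $n$ and every $x$, $$\frac{(n+1)(3n+2)x}{6\kappa}\,{}_3F_2\left[\begin{matrix}-n,\frac{n+3}2,\frac{n+2}2\\ \frac43,\frac53\end{matrix};x\right]+{}_3F_2\left[\begin{matrix}-n-1,\frac{n+2}2,\frac{n+1}2\\ \frac13,\frac23\end{matrix};x\right]-{}_3F_2\left[\begin{matrix}-n,\frac{n+1}2,\frac n2\\ \frac13,\frac23\end{matrix};x\right]=0,$$ $$\frac{(n+1)(n+2)x}{2\kappa}\,{}_3F_2\left[\begin{matrix}-n,\frac{n+4}2,\frac{n+3}2\\ \frac43,\frac53\end{matrix};x\right]+{}_3F_2\left[\begin{matrix}-n-1,\frac{n+2}2,\frac{n+3}2\\ \frac13,\frac23\end{matrix};x\right]-{}_3F_2\left[\begin{matrix}-n,\frac{n+1}2,\frac{n+2}2\\ \frac13,\frac23\end{matrix};x\right]=0.$$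
   Context: ${}_3F_2\left[\begin{matrix}a_1,a_2,a_3\\ b_1,b_2\end{matrix};x\right]=\sum_{k\ge0}\frac{(a_1)_k(a_2)_k(a_3)_k}{(b_1)_k(b_2)_k}\frac{x^k}{k!}$, $(x)_k=x(x+1)\cdots(x+k-1)$, $(x)_0=1$; with $a_1$ a nonpositive integer these are polynomials in $x$. *)

theory Defs
  imports Complex_Main
begin

text \<open>Terminating 3F2 with first upper parameter a1 = -m (m a natural number).
  Since pochhammer (-m) k = 0 for k > m, the series is the finite sum up to k = m.\<close>
definition hyp3F2_term :: "real \<Rightarrow> real \<Rightarrow> real \<Rightarrow> real \<Rightarrow> real \<Rightarrow> real \<Rightarrow> nat \<Rightarrow> real" where
  "hyp3F2_term a1 a2 a3 b1 b2 x k =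
     pochhammer a1 k * pochhammer a2 k * pochhammer a3 k
     / (pochhammer b1 k * pochhammer b2 k) * x ^ k / fact k"

definition hyp3F2_term_poly :: "nat \<Rightarrow> real \<Rightarrow> real \<Rightarrow> real \<Rightarrow> real \<Rightarrow> real \<Rightarrow> real" where
  "hyp3F2_term_poly m a2 a3 b1 b2 x = (\<Sum>k\<le>m. hyp3F2_term (- real m) a2 a3 b1 b2 x k)"

definition kappa :: real where "kappa = 4 / 27"

end

theory Submission
  imports Defs
begin

text \<open>Both identities are instances of one contiguous relation for terminating series,
  \<open>F(-m-1, p, q+1; b\<^sub>1, b\<^sub>2; x) - F(-m, p, q; b\<^sub>1, b\<^sub>2; x) =
   (-m-q-1) p x / (b\<^sub>1 b\<^sub>2) F(-m, p+1, q+1; b\<^sub>1+1, b\<^sub>2+1; x)\<close>,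
  taken at \<open>(p, q) = ((n+1)/2, n/2)\<close> and at \<open>(p, q) = ((n+2)/2, (n+1)/2)\<close> with
  \<open>b\<^sub>1 = 1/3, b\<^sub>2 = 2/3\<close>, using that \<open>F\<close> is symmetric in its upper parameters.
  The relation holds term by term: the \<open>(k+1)\<close>-st terms on the left share all Pochhammer
  factors of the \<open>k\<close>-th term on the right, and the leftover linear factors combine to
  \<open>(-m-q-1)(k+1)\<close>.\<close>

lemma hyp3F2_term_swap: "hyp3F2_term a1 a2 a3 b1 b2 x k = hyp3F2_term a1 a3 a2 b1 b2 x k"
  by (simp add: hyp3F2_term_def mult_ac)

lemma hyp3F2_term_poly_swap:
  "hyp3F2_term_poly m a2 a3 b1 b2 x = hyp3F2_term_poly m a3 a2 b1 b2 x"
  by (simp add: hyp3F2_term_poly_def hyp3F2_term_swap)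

lemma hyp3F2_term_Suc_contiguous:
  fixes a p q b1 b2 x :: real
  shows "hyp3F2_term (a - 1) p (q + 1) b1 b2 x (Suc k) - hyp3F2_term a p q b1 b2 x (Suc k)
       = (a - q - 1) * p * x / (b1 * b2) * hyp3F2_term a (p + 1) (q + 1) (b1 + 1) (b2 + 1) x k"
proof -
  define N where "N = pochhammer a k * pochhammer (p + 1) k * pochhammer (q + 1) k"
  define D where "D = pochhammer (b1 + 1) k * pochhammer (b2 + 1) k"
  define C where "C = p * N / (b1 * b2 * D) * x ^ Suc k / fact (Suc k)"
  have left: "hyp3F2_term (a - 1) p (q + 1) b1 b2 x (Suc k) = (a - 1) * (q + 1 + k) * C"
    by (simp add: hyp3F2_term_def N_def D_def C_def pochhammer_rec[of "a - 1"] pochhammer_rec[of p]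
        pochhammer_rec[of b1] pochhammer_rec[of b2] pochhammer_rec'[of "q + 1"] mult_ac)
  have middle: "hyp3F2_term a p q b1 b2 x (Suc k) = (a + k) * q * C"
    by (simp add: hyp3F2_term_def N_def D_def C_def pochhammer_rec[of p] pochhammer_rec[of q]
        pochhammer_rec[of b1] pochhammer_rec[of b2] pochhammer_rec'[of a] mult_ac)
  have right: "hyp3F2_term a (p + 1) (q + 1) (b1 + 1) (b2 + 1) x k = N / D * x ^ k / fact k"
    by (simp add: hyp3F2_term_def N_def D_def)
  have scale: "(k + 1) * C = p * x / (b1 * b2) * (N / D * x ^ k / fact k)"
    by (simp add: C_def field_simps del: of_nat_Suc)
  have "(a - 1) * (q + 1 + k) * C - (a + k) * q * C = (a - q - 1) * ((k + 1) * C)"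
    by (simp add: algebra_simps)
  then show ?thesis
    unfolding left middle right scale by (simp add: mult_ac)
qed

lemma hyp3F2_term_poly_contiguous:
  "hyp3F2_term_poly (Suc m) p (q + 1) b1 b2 x - hyp3F2_term_poly m p q b1 b2 x
     = (- real m - q - 1) * p * x / (b1 * b2)
         * hyp3F2_term_poly m (p + 1) (q + 1) (b1 + 1) (b2 + 1) x"
proof -
  let ?t = "\<lambda>a a3 k. hyp3F2_term a p a3 b1 b2 x k"
  have "?t (- real m) q (Suc m) = 0"
    by (simp add: hyp3F2_term_def pochhammer_eq_0_iff)
  then have poly_m: "hyp3F2_term_poly m p q b1 b2 x = (\<Sum>k\<le>Suc m. ?t (- real m) q k)"
    by (simp only: hyp3F2_term_poly_def sum.atMost_Suc add_0_right)
  have "- real (Suc m) = - real m - 1"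
    by simp
  then have poly_Suc: "hyp3F2_term_poly (Suc m) p (q + 1) b1 b2 x
      = (\<Sum>k\<le>Suc m. ?t (- real m - 1) (q + 1) k)"
    by (simp only: hyp3F2_term_poly_def)
  have "hyp3F2_term_poly (Suc m) p (q + 1) b1 b2 x - hyp3F2_term_poly m p q b1 b2 x
      = (\<Sum>k\<le>Suc m. ?t (- real m - 1) (q + 1) k - ?t (- real m) q k)"
    unfolding poly_m poly_Suc by (rule sum_subtractf[symmetric])
  also have "\<dots> = (\<Sum>k\<le>m. ?t (- real m - 1) (q + 1) (Suc k) - ?t (- real m) q (Suc k))"
    by (subst sum.atMost_Suc_shift) (simp add: hyp3F2_term_def)
  also have "\<dots> = (\<Sum>k\<le>m. (- real m - q - 1) * p * x / (b1 * b2)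
      * hyp3F2_term (- real m) (p + 1) (q + 1) (b1 + 1) (b2 + 1) x k)"
    by (simp only: hyp3F2_term_Suc_contiguous)
  also have "\<dots> = (- real m - q - 1) * p * x / (b1 * b2)
      * hyp3F2_term_poly m (p + 1) (q + 1) (b1 + 1) (b2 + 1) x"
    by (simp only: hyp3F2_term_poly_def sum_distrib_left)
  finally show ?thesis .
qed

theorem proposition7:
  fixes n :: nat and x :: real
  assumes "n \<ge> 1"
  shows "(real n + 1) * (3 * real n + 2) * x / (6 * kappa)
           * hyp3F2_term_poly n ((real n + 3) / 2) ((real n + 2) / 2) (4/3) (5/3) x
         + hyp3F2_term_poly (n + 1) ((real n + 2) / 2) ((real n + 1) / 2) (1/3) (2/3) x
         - hyp3F2_term_poly n ((real n + 1) / 2) (real n / 2) (1/3) (2/3) x = 0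
       \<and> (real n + 1) * (real n + 2) * x / (2 * kappa)
           * hyp3F2_term_poly n ((real n + 4) / 2) ((real n + 3) / 2) (4/3) (5/3) x
         + hyp3F2_term_poly (n + 1) ((real n + 2) / 2) ((real n + 3) / 2) (1/3) (2/3) x
         - hyp3F2_term_poly n ((real n + 1) / 2) ((real n + 2) / 2) (1/3) (2/3) x = 0"
proof -
  have params: "real n / 2 + 1 = (real n + 2) / 2" "(real n + 1) / 2 + 1 = (real n + 3) / 2"
    "(real n + 2) / 2 + 1 = (real n + 4) / 2" "1/3 + 1 = (4/3::real)" "2/3 + 1 = (5/3::real)"
    by simp_all
  have coeff1: "(- real n - real n / 2 - 1) * ((real n + 1) / 2) * x / (1/3 * (2/3))
      = - ((real n + 1) * (3 * real n + 2) * x / (6 * kappa))"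
    by (simp add: kappa_def field_simps)
  have coeff2: "(- real n - (real n + 1) / 2 - 1) * ((real n + 2) / 2) * x / (1/3 * (2/3))
      = - ((real n + 1) * (real n + 2) * x / (2 * kappa))"
    by (simp add: kappa_def field_simps)
  note rel1 = hyp3F2_term_poly_contiguous[of n "(real n + 1) / 2" "real n / 2" "1/3" "2/3" x,
      unfolded params coeff1 Suc_eq_plus1 hyp3F2_term_poly_swap[of "n + 1" "(real n + 1) / 2"]]
  note rel2 = hyp3F2_term_poly_contiguous[of n "(real n + 2) / 2" "(real n + 1) / 2" "1/3" "2/3" x,
      unfolded params coeff2 Suc_eq_plus1 hyp3F2_term_poly_swap[of n "(real n + 2) / 2"]]
  show ?thesis
    using rel1 rel2 by linarith
qed

end
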